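(* Let $V$ be a real vector space of dimension $2m$ with a positive definite symmetric bilinear form $d$ and a real-linear $J$ with $J^2=-1$ and $d(Ju,Jv)=d(u,v)$ for all $u,v$. Let $V_{\mathbb C}=V\otimes_{\mathbb R}\mathbb C$ with conjugation $w\mapsto\bar w$, and extend $d$ complex-bilinearly and real-linear operators complex-linearly to $V_{\mathbb C}$. Let $W\le V_{\mathbb C}$ be an admissible polarization, i.e. a complex subspace with $W\cap\overline W=\{0\}$, $W\oplus\overline W=V_{\mathbb C}$, and $d(w_1,w_2)=0$ for all $w_1,w_2\in W$; let $J_W\in\operatorname{End}_{\mathbb R}(V)$ be the (orthogonal, $J_W^2=-1$) operator with $W=\{\tfrac12(u-iJ_Wu):u\in V\}$, and let $W_J:=\{\tfrac12(u-iJu):u\in V\}$. Consider the complex-linear operator $B:=\tfrac12(1-J_WJ)$ on the Hilbert space $V_{\mathbb C}$ with inner product $\langle\langle w_1|w_2\rangle\rangle:=2d(\bar w_1,w_2)$. Then the adjoint of $B$ is $B^\dagger=\tfrac12(1-JJ_W)$, and $$\ker B=\ker B^\dagger=(W\cap\overline{W_J})\oplus(\overline W\cap W_J).$$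
   Context: For every admissible polarization $W$ (as defined in the claim) there is a unique real-linear $J_W$ on $V$ with $W=\{\tfrac12(u-iJ_Wu):u\in V\}$; it satisfies $J_W^2=-1$ and is orthogonal for $d$. *)

theory Defs
  imports "HOL-Analysis.Analysis"
begin

text \<open>Complexification V_C = V (x) C of a real vector space V is modelled as V \<times> V,
  the pair (a, b) standing for a + i b.\<close>

type_synonym 'v cplx = "'v \<times> 'v"

definition cscale :: "complex \<Rightarrow> 'v::real_vector cplx \<Rightarrow> 'v cplx" where
  "cscale z w = (Re z *\<^sub>R fst w - Im z *\<^sub>R snd w, Re z *\<^sub>R snd w + Im z *\<^sub>R fst w)"

definition cconj :: "'v::real_vector cplx \<Rightarrow> 'v cplx" where
  "cconj w = (fst w, - snd w)"

definition cconj_set :: "'v::real_vector cplx set \<Rightarrow> 'v cplx set" where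
  "cconj_set W = cconj ` W"

definition cext :: "('v::real_vector \<Rightarrow> 'v) \<Rightarrow> 'v cplx \<Rightarrow> 'v cplx" where
  "cext T w = (T (fst w), T (snd w))"

definition cform :: "('v::real_vector \<Rightarrow> 'v \<Rightarrow> real) \<Rightarrow> 'v cplx \<Rightarrow> 'v cplx \<Rightarrow> complex" where
  "cform d w1 w2 = Complex (d (fst w1) (fst w2) - d (snd w1) (snd w2))
                           (d (fst w1) (snd w2) + d (snd w1) (fst w2))"

definition hinner :: "('v::real_vector \<Rightarrow> 'v \<Rightarrow> real) \<Rightarrow> 'v cplx \<Rightarrow> 'v cplx \<Rightarrow> complex" where
  "hinner d w1 w2 = 2 * cform d (cconj w1) w2"

definition complex_subspace :: "'v::real_vector cplx set \<Rightarrow> bool" where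
  "complex_subspace W \<longleftrightarrow> 0 \<in> W \<and> (\<forall>x\<in>W. \<forall>y\<in>W. x + y \<in> W) \<and> (\<forall>z. \<forall>x\<in>W. cscale z x \<in> W)"

definition admissible_polarization ::
  "('v::real_vector \<Rightarrow> 'v \<Rightarrow> real) \<Rightarrow> 'v cplx set \<Rightarrow> bool" where
  "admissible_polarization d W \<longleftrightarrow>
     complex_subspace W \<and> W \<inter> cconj_set W = {0} \<and>
     {x + y | x y. x \<in> W \<and> y \<in> cconj_set W} = UNIV \<and>
     (\<forall>w1\<in>W. \<forall>w2\<in>W. cform d w1 w2 = 0)"

definition polarization_of :: "('v::real_vector \<Rightarrow> 'v) \<Rightarrow> 'v cplx set" where
  "polarization_of K = {((1/2) *\<^sub>R u, - ((1/2) *\<^sub>R K u)) | u. True}"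

definition is_adjoint ::
  "('v::real_vector \<Rightarrow> 'v \<Rightarrow> real) \<Rightarrow> ('v cplx \<Rightarrow> 'v cplx) \<Rightarrow> ('v cplx \<Rightarrow> 'v cplx) \<Rightarrow> bool" where
  "is_adjoint d A Ad \<longleftrightarrow> (\<forall>x y. hinner d (A x) y = hinner d x (Ad y))"

definition ker :: "('v::real_vector cplx \<Rightarrow> 'v cplx) \<Rightarrow> 'v cplx set" where
  "ker A = {w. A w = 0}"

definition is_direct_sum :: "'v::real_vector cplx set \<Rightarrow> 'v cplx set \<Rightarrow> 'v cplx set \<Rightarrow> bool" where
  "is_direct_sum S A B \<longleftrightarrow> S = {x + y | x y. x \<in> A \<and> y \<in> B} \<and> A \<inter> B = {0}"

end

(* In the model V_C = V x V the subspace polarization_of K is the graph of -K. Closure of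
   W = polarization_of J_W under multiplication by i forces J_W^2 = -1, and isotropy of W
   forces J_W to be d-orthogonal; hence J and J_W are both d-skew, the real transpose of J_W J
   is J J_W, and complexifying gives the adjoint. Both kernels are S x S for
   S = {u. J_W u = - J u}, a J-invariant subspace, while the two intersections are the graphs
   of J and of -J over S; S x S splits as their sum since J^2 = -1. *)

theory Submission
  imports Defs
begin

lemma ker_cext: "ker (cext T) = {u. T u = 0} \<times> {u. T u = 0}"
  by (auto simp: ker_def cext_def prod_eq_iff)

lemma mem_polarization_of_iff:
  assumes "linear K"
  shows "w \<in> polarization_of K \<longleftrightarrow> snd w = - K (fst w)"
proof
  assume "w \<in> polarization_of K"
  then show "snd w = - K (fst w)"
    using assms by (auto simp: polarization_of_def linear_scale)
next
  assume "snd w = - K (fst w)"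
  then have "w = ((1/2) *\<^sub>R (2 *\<^sub>R fst w), - ((1/2) *\<^sub>R K (2 *\<^sub>R fst w)))"
    using assms by (simp add: linear_scale prod_eq_iff)
  then show "w \<in> polarization_of K"
    unfolding polarization_of_def by blast
qed

lemma mem_cconj_set_iff: "w \<in> cconj_set P \<longleftrightarrow> cconj w \<in> P"
  by (force simp: cconj_set_def cconj_def)

lemma mem_cconj_set_polarization_of_iff:
  assumes "linear K"
  shows "w \<in> cconj_set (polarization_of K) \<longleftrightarrow> snd w = K (fst w)"
  by (auto simp: mem_cconj_set_iff mem_polarization_of_iff[OF assms] cconj_def)

text \<open>Multiplication by \<open>i\<close> maps \<open>(u, - K u)\<close> to \<open>(K u, u)\<close>, which lies in the graph of
  \<open>- K\<close> only if \<open>K (K u) = - u\<close>.\<close>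
lemma polarization_of_complex_subspace_imp_sq:
  assumes "linear K" and "complex_subspace (polarization_of K)"
  shows "K (K u) = - u"
proof -
  have "(u, - K u) \<in> polarization_of K"
    by (simp add: mem_polarization_of_iff[OF assms(1)])
  then have "cscale \<i> (u, - K u) \<in> polarization_of K"
    using assms(2) unfolding complex_subspace_def by blast
  then have "u = - K (K u)"
    by (simp add: cscale_def mem_polarization_of_iff[OF assms(1)])
  then show ?thesis by (metis minus_minus)
qed

text \<open>The real part of \<open>d\<close> on a pair of vectors \<open>(u, - K u)\<close>, \<open>(v, - K v)\<close> is
  \<open>d u v - d (K u) (K v)\<close>.\<close>
lemma isotropic_polarization_of_imp_orthogonal:
  assumes "linear K" and "bilinear d"
    and "\<forall>w1\<in>polarization_of K. \<forall>w2\<in>polarization_of K. cform d w1 w2 = 0"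
  shows "d (K u) (K v) = d u v"
proof -
  have "(u, - K u) \<in> polarization_of K" "(v, - K v) \<in> polarization_of K"
    by (simp_all add: mem_polarization_of_iff[OF assms(1)])
  then have "Re (cform d (u, - K u) (v, - K v)) = 0"
    using assms(3) by simp
  then show ?thesis
    by (simp add: cform_def bilinear_lneg[OF assms(2)] bilinear_rneg[OF assms(2)])
qed

lemma orthogonal_complex_structure_skew:
  assumes "bilinear d" and "\<And>u. K (K u) = - u" and "\<And>u v. d (K u) (K v) = d u v"
  shows "d (K u) v = - d u (K v)"
proof -
  have "d (K u) v = d (K (K u)) (K v)" by (simp add: assms(3))
  also have "\<dots> = - d u (K v)" by (simp add: assms(2) bilinear_lneg[OF assms(1)])
  finally show ?thesis .
qed

lemma is_adjoint_cext:
  assumes "bilinear d" and "\<And>u v. d (T u) v = d u (T' v)"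
  shows "is_adjoint d (cext T) (cext T')"
  unfolding is_adjoint_def hinner_def cform_def cconj_def cext_def
  by (simp add: assms(2) bilinear_lneg[OF assms(1)])

lemma is_adjoint_half_one_minus_comp:
  assumes "bilinear d"
    and "\<And>u. J (J u) = - u" and "\<And>u v. d (J u) (J v) = d u v"
    and "\<And>u. K (K u) = - u" and "\<And>u v. d (K u) (K v) = d u v"
  shows "is_adjoint d (cext (\<lambda>u. (1/2) *\<^sub>R (u - K (J u))))
                      (cext (\<lambda>u. (1/2) *\<^sub>R (u - J (K u))))"
proof (rule is_adjoint_cext[OF assms(1)])
  fix u v
  have "d (K (J u)) v = d u (J (K v))"
    using orthogonal_complex_structure_skew[OF assms(1,2,3)]
      orthogonal_complex_structure_skew[OF assms(1,4,5)] by simp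
  then show "d ((1/2) *\<^sub>R (u - K (J u))) v = d u ((1/2) *\<^sub>R (v - J (K v)))"
    by (simp add: bilinear_lmul[OF assms(1)] bilinear_rmul[OF assms(1)]
        bilinear_lsub[OF assms(1)] bilinear_rsub[OF assms(1)])
qed

lemma half_one_minus_comp_eq_0_iff:
  assumes "linear A" and "\<And>u. A (A u) = - u"
  shows "(1/2) *\<^sub>R (u - A (B u)) = 0 \<longleftrightarrow> B u = - A u"
proof
  assume "(1/2) *\<^sub>R (u - A (B u)) = 0"
  then have "A (A (B u)) = A u" by simp
  then show "B u = - A u" by (simp add: assms(2) minus_equation_iff)
next
  assume "B u = - A u"
  then show "(1/2) *\<^sub>R (u - A (B u)) = 0" by (simp add: assms linear_neg)
qed

lemma ker_cext_half_one_minus_comp: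
  assumes "linear A" and "\<And>u. A (A u) = - u"
  shows "ker (cext (\<lambda>u. (1/2) *\<^sub>R (u - A (B u))))
    = {u. B u = - A u} \<times> {u. B u = - A u}"
  by (simp only: ker_cext half_one_minus_comp_eq_0_iff[OF assms])

lemma polarization_of_inter_cconj_set:
  assumes "linear K" and "linear J"
  shows "polarization_of K \<inter> cconj_set (polarization_of J) = {(a, J a) | a. K a = - J a}"
  by (auto simp: mem_polarization_of_iff[OF assms(1)]
      mem_cconj_set_polarization_of_iff[OF assms(2)] minus_equation_iff)

lemma cconj_set_polarization_of_inter:
  assumes "linear K" and "linear J"
  shows "cconj_set (polarization_of K) \<inter> polarization_of J = {(a, - J a) | a. K a = - J a}"
  by (auto simp: mem_polarization_of_iff[OF assms(2)]
      mem_cconj_set_polarization_of_iff[OF assms(1)])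

text \<open>The witnesses: \<open>(x, y) = (a, J a) + (a', - J a')\<close> with \<open>a = (x - J y)/2\<close>, \<open>a' = (x + J y)/2\<close>.\<close>
lemma is_direct_sum_graphs_of_complex_structure:
  assumes J_lin: "linear J" and J_sq: "\<And>u. J (J u) = - u"
    and S: "subspace S" and J_S: "J ` S \<subseteq> S"
  shows "is_direct_sum (S \<times> S) {(a, J a) | a. a \<in> S} {(a, - J a) | a. a \<in> S}"
  unfolding is_direct_sum_def
proof (intro conjI set_eqI iffI)
  fix w assume "w \<in> S \<times> S"
  then obtain x y where w: "w = (x, y)" and xy: "x \<in> S" "y \<in> S" by blast
  define a where "a = (1/2) *\<^sub>R (x - J y)"
  define a' where "a' = (1/2) *\<^sub>R (x + J y)"
  have "J y \<in> S" using xy J_S by blast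
  then have "a \<in> S" "a' \<in> S"
    unfolding a_def a'_def using S xy
    by (simp_all add: subspace_scale subspace_diff subspace_add)
  moreover have "a + a' = x"
    unfolding a_def a'_def by (simp flip: scaleR_right_distrib add: scaleR_2 [symmetric])
  moreover have "a - a' = - J y"
    unfolding a_def a'_def by (simp add: algebra_simps flip: scaleR_add_left)
  then have "J a + - J a' = y"
    by (simp flip: linear_diff[OF J_lin] add: linear_neg[OF J_lin] J_sq)
  ultimately show "w \<in> {x + y | x y. x \<in> {(a, J a) | a. a \<in> S} \<and> y \<in> {(a, - J a) | a. a \<in> S}}"
    using w by force
next
  fix w assume "w \<in> {x + y | x y. x \<in> {(a, J a) | a. a \<in> S} \<and> y \<in> {(a, - J a) | a. a \<in> S}}"
  then obtain a a' where "a \<in> S" "a' \<in> S" and "w = (a + a', J (a - a'))"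
    by (auto simp: linear_diff[OF J_lin])
  then show "w \<in> S \<times> S"
    using S J_S by (auto simp: subspace_add subspace_diff)
next
  fix w assume "w \<in> {(a, J a) | a. a \<in> S} \<inter> {(a, - J a) | a. a \<in> S}"
  then obtain a where w: "w = (a, J a)" and "J a = - J a" by auto
  then have "J a = 0" by (simp add: eq_neg_iff_add_eq_0 flip: scaleR_2)
  then have "a = 0" using J_sq[of a] by (simp add: linear_0[OF J_lin])
  with w \<open>J a = 0\<close> show "w \<in> {0}" by (simp add: zero_prod_def)
next
  fix w :: "'a \<times> 'a" assume "w \<in> {0}"
  then show "w \<in> {(a, J a) | a. a \<in> S} \<inter> {(a, - J a) | a. a \<in> S}"
    using S by (auto simp: zero_prod_def linear_0[OF J_lin] subspace_0)
qed

lemma is_direct_sum_graphs_on_ker_add: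
  assumes "linear J" and J_sq: "\<And>u. J (J u) = - u"
    and "linear K" and K_sq: "\<And>u. K (K u) = - u"
  defines "S \<equiv> {u. K u = - J u}"
  shows "is_direct_sum (S \<times> S) {(a, J a) | a. K a = - J a} {(a, - J a) | a. K a = - J a}"
proof -
  have "subspace S"
    unfolding S_def eq_neg_iff_add_eq_0
    by (intro linear_subspace_kernel linear_compose_add assms(1,3))
  moreover have "J ` S \<subseteq> S"
  proof
    fix v assume "v \<in> J ` S"
    then obtain u where "K u = - J u" and v: "v = J u" by (auto simp: S_def)
    then have "K (K u) = - K (J u)" by (simp add: linear_neg[OF assms(3)])
    then show "v \<in> S" by (simp add: v S_def J_sq K_sq)
  qed
  ultimately have "is_direct_sum (S \<times> S) {(a, J a) | a. a \<in> S} {(a, - J a) | a. a \<in> S}"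
    by (rule is_direct_sum_graphs_of_complex_structure[OF assms(1) J_sq])
  then show ?thesis by (simp add: S_def)
qed

theorem proposition2p8:
  fixes d :: "'v::euclidean_space \<Rightarrow> 'v \<Rightarrow> real"
    and J JW :: "'v \<Rightarrow> 'v"
    and W :: "'v cplx set"
    and m :: nat
  assumes dim: "DIM('v) = 2 * m"
    and d_bilin: "bilinear d"
    and d_sym: "\<forall>u v. d u v = d v u"
    and d_pos: "\<forall>u. u \<noteq> 0 \<longrightarrow> d u u > 0"
    and J_lin: "linear J"
    and J_sq: "\<forall>u. J (J u) = - u"
    and J_orth: "\<forall>u v. d (J u) (J v) = d u v"
    and W_adm: "admissible_polarization d W"
    and JW_lin: "linear JW"
    and JW_def: "W = polarization_of JW"
  shows "is_adjoint d (cext (\<lambda>u. (1/2) *\<^sub>R (u - JW (J u))))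
                      (cext (\<lambda>u. (1/2) *\<^sub>R (u - J (JW u))))
       \<and> ker (cext (\<lambda>u. (1/2) *\<^sub>R (u - JW (J u))))
           = ker (cext (\<lambda>u. (1/2) *\<^sub>R (u - J (JW u))))
       \<and> is_direct_sum (ker (cext (\<lambda>u. (1/2) *\<^sub>R (u - JW (J u)))))
           (W \<inter> cconj_set (polarization_of J))
           (cconj_set W \<inter> polarization_of J)"
proof -
  have JW_sq: "\<And>u. JW (JW u) = - u"
    using polarization_of_complex_subspace_imp_sq[OF JW_lin] W_adm
    by (simp add: JW_def admissible_polarization_def)
  have JW_orth: "\<And>u v. d (JW u) (JW v) = d u v"
    using isotropic_polarization_of_imp_orthogonal[OF JW_lin d_bilin] W_adm
    by (simp add: JW_def admissible_polarization_def)
  have J_sq': "\<And>u. J (J u) = - u" and J_orth': "\<And>u v. d (J u) (J v) = d u v"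
    using J_sq J_orth by simp_all
  have "ker (cext (\<lambda>u. (1/2) *\<^sub>R (u - JW (J u)))) = {u. JW u = - J u} \<times> {u. JW u = - J u}"
    "ker (cext (\<lambda>u. (1/2) *\<^sub>R (u - J (JW u)))) = {u. JW u = - J u} \<times> {u. JW u = - J u}"
    by (simp_all only: ker_cext_half_one_minus_comp[OF JW_lin JW_sq]
        ker_cext_half_one_minus_comp[OF J_lin J_sq'] equation_minus_iff[of "J _"])
  then show ?thesis
    using is_adjoint_half_one_minus_comp[OF d_bilin J_sq' J_orth' JW_sq JW_orth]
      is_direct_sum_graphs_on_ker_add[OF J_lin J_sq' JW_lin JW_sq]
    by (simp add: JW_def polarization_of_inter_cconj_set cconj_set_polarization_of_inter
        JW_lin J_lin)
qed

end
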